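(* Let $n\in\mathbb{N}$ and $\hbar\in{]0,\infty[}$. The map $\Theta_\hbar:\mathscr{P}(\mathbb{C}^{1+n})\to\mathscr{P}(\mathbb{C}^{1+n})$, $$\Theta_\hbar(f)=\Big(\exp\Big(-\hbar\sum_{j=0}^n\frac{\partial^2}{\partial z_j\partial\overline{z_j}}\Big)f\Big)\circ\overline{\,\cdot\,},$$ where $\overline{\,\cdot\,}:\mathbb{C}^{1+n}\to\mathbb{C}^{1+n}$ is componentwise complex conjugation, is a linear bijection satisfying $\Theta_\hbar(f\star_\hbar g)=\Theta_\hbar(f)\star_{-\hbar}\Theta_\hbar(g)$ and $\Theta_\hbar(\overline{f})=\overline{\Theta_\hbar(f)}$ for all $f,g\in\mathscr{P}(\mathbb{C}^{1+n})$; i.e. it is a $^*$-isomorphism from $(\mathscr{P}(\mathbb{C}^{1+n}),\star_\hbar)$ to $(\mathscr{P}(\mathbb{C}^{1+n}),\star_{-\hbar})$.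
   Context: $\mathscr{P}(\mathbb{C}^{1+n})$ is the space of complex polynomials in $z_0,\dots,z_n,\overline{z_0},\dots,\overline{z_n}$. For $\hbar\in\mathbb{R}$, the Wick product is $f\star_\hbar g=\sum_{K\in\mathbb{N}_0^{1+n}}\frac{\hbar^{|K|}}{K!}\frac{\partial^{|K|}f}{\partial\overline{z}^K}\frac{\partial^{|K|}g}{\partial z^K}$, with involution pointwise complex conjugation. *)

theory Defs
  imports Complex_Main "HOL-Library.Poly_Mapping" "HOL-Library.Product_Plus"
begin

text \<open>Polynomials in z_0,..,z_n, conj z_0,..,conj z_n with complex coefficients, represented
  by their (finitely supported) coefficient function on monomials.  A monomial
  z^a (conj z)^b is the pair (a,b) of exponent multi-indices (a for the holomorphic
  variables, b for the antiholomorphic ones).  The pointwise product of polynomial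
  functions is the product of poly_mappings (convolution of coefficients).\<close>

type_synonym mono = "(nat \<Rightarrow>\<^sub>0 nat) \<times> (nat \<Rightarrow>\<^sub>0 nat)"
type_synonym cpoly = "mono \<Rightarrow>\<^sub>0 complex"

definition Pn :: "nat \<Rightarrow> cpoly set" where
  "Pn n = {f. \<forall>m\<in>Poly_Mapping.keys (f::cpoly). Poly_Mapping.keys (fst m) \<subseteq> {..n} \<and> Poly_Mapping.keys (snd m) \<subseteq> {..n}}"

definition psmult :: "complex \<Rightarrow> cpoly \<Rightarrow> cpoly" where
  "psmult c f = Poly_Mapping.map (\<lambda>x. c * x) f"

text \<open>Pointwise complex conjugation of the polynomial function:
  conj (c z^a (conj z)^b) = (conj c) z^b (conj z)^a.\<close>
definition pconj :: "cpoly \<Rightarrow> cpoly" where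
  "pconj f = (\<Sum>m\<in>Poly_Mapping.keys f. Poly_Mapping.single (snd m, fst m) (cnj (Poly_Mapping.lookup f m)))"

text \<open>Composition with componentwise conjugation of the argument:
  (f o conj)(z) = f(conj z), i.e. c z^a (conj z)^b becomes c z^b (conj z)^a.\<close>
definition compconj :: "cpoly \<Rightarrow> cpoly" where
  "compconj f = (\<Sum>m\<in>Poly_Mapping.keys f. Poly_Mapping.single (snd m, fst m) (Poly_Mapping.lookup f m))"

definition dz :: "nat \<Rightarrow> cpoly \<Rightarrow> cpoly" where
  "dz j f = (\<Sum>m\<in>Poly_Mapping.keys f. Poly_Mapping.single (fst m - Poly_Mapping.single j 1, snd m)
              (of_nat (Poly_Mapping.lookup (fst m) j) * Poly_Mapping.lookup f m))"

definition dzb :: "nat \<Rightarrow> cpoly \<Rightarrow> cpoly" where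
  "dzb j f = (\<Sum>m\<in>Poly_Mapping.keys f. Poly_Mapping.single (fst m, snd m - Poly_Mapping.single j 1)
              (of_nat (Poly_Mapping.lookup (snd m) j) * Poly_Mapping.lookup f m))"

definition dzK :: "(nat \<Rightarrow>\<^sub>0 nat) \<Rightarrow> cpoly \<Rightarrow> cpoly" where
  "dzK K f = fold (\<lambda>j g. (dz j ^^ Poly_Mapping.lookup K j) g) (sorted_list_of_set (Poly_Mapping.keys K)) f"

definition dzbK :: "(nat \<Rightarrow>\<^sub>0 nat) \<Rightarrow> cpoly \<Rightarrow> cpoly" where
  "dzbK K f = fold (\<lambda>j g. (dzb j ^^ Poly_Mapping.lookup K j) g) (sorted_list_of_set (Poly_Mapping.keys K)) f"

definition mabs :: "(nat \<Rightarrow>\<^sub>0 nat) \<Rightarrow> nat" where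
  "mabs K = (\<Sum>j\<in>Poly_Mapping.keys K. Poly_Mapping.lookup K j)"

definition mfact :: "(nat \<Rightarrow>\<^sub>0 nat) \<Rightarrow> nat" where
  "mfact K = (\<Prod>j\<in>Poly_Mapping.keys K. fact (Poly_Mapping.lookup K j))"

text \<open>Wick product.  The series over all multi-indices K has only finitely many
  nonzero terms; its value is the (finite) sum of the nonzero terms.\<close>
definition wick_term :: "real \<Rightarrow> cpoly \<Rightarrow> cpoly \<Rightarrow> (nat \<Rightarrow>\<^sub>0 nat) \<Rightarrow> cpoly" where
  "wick_term h f g K =
     psmult (complex_of_real (h ^ mabs K / real (mfact K))) (dzbK K f * dzK K g)"

definition wick :: "real \<Rightarrow> cpoly \<Rightarrow> cpoly \<Rightarrow> cpoly" where
  "wick h f g = (\<Sum>K\<in>{K. wick_term h f g K \<noteq> 0}. wick_term h f g K)"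

definition lap :: "nat \<Rightarrow> cpoly \<Rightarrow> cpoly" where
  "lap n f = (\<Sum>j\<le>n. dz j (dzb j f))"

text \<open>exp(-h * lap) f = sum_k (-h)^k/k! lap^k f; finitely many nonzero terms
  since lap is nilpotent on each polynomial.\<close>
definition exp_term :: "nat \<Rightarrow> real \<Rightarrow> cpoly \<Rightarrow> nat \<Rightarrow> cpoly" where
  "exp_term n h f k = psmult (complex_of_real ((- h) ^ k / fact k)) ((lap n ^^ k) f)"

definition exp_lap :: "nat \<Rightarrow> real \<Rightarrow> cpoly \<Rightarrow> cpoly" where
  "exp_lap n h f = (\<Sum>k\<in>{k. exp_term n h f k \<noteq> 0}. exp_term n h f k)"

definition Theta :: "nat \<Rightarrow> real \<Rightarrow> cpoly \<Rightarrow> cpoly" where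
  "Theta n h f = compconj (exp_lap n h f)"

end

(*
  Delta lowers the
  holomorphic degree, so exp(s Delta) is a finite sum and s |-> exp(s Delta) is a one-parameter
  group; hence Theta is bijective with inverse exp(h Delta) o compconj.

  From [Delta, z_k] = d/dzb_k one gets exp(-h Delta)(z_k u) = z_k exp(-h Delta) u
  - h d/dzb_k exp(-h Delta) u, and compconj exchanges z_k with zb_k and d/dz_k with d/dzb_k.
  As a function of its right factor, the Wick product is determined by f # c = c f, additivity,
  f # (zb_k g) = zb_k (f # g) and f # (z_k g) = z_k (f # g) + h (d/dzb_k f) # g, and d/dz_k,
  d/dzb_k are derivations of it.  So Theta (f #_h g) and Theta f #_(-h) Theta g satisfy the same
  recursion in g and agree by induction over the generators 1, z_k, zb_k of P(C^(1+n)).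
  Delta has real coefficients, hence commutes with pointwise conjugation.
*)
theory Submission
  imports Defs
begin

abbreviation monom :: "mono \<Rightarrow> complex \<Rightarrow> cpoly" where
  "monom \<equiv> Poly_Mapping.single"

abbreviation coeff :: "cpoly \<Rightarrow> mono \<Rightarrow> complex" where
  "coeff \<equiv> Poly_Mapping.lookup"

text \<open>\<open>Suc 0\<close> rather than \<open>1\<close>: \<open>One_nat_def\<close> is a simp rule, so rules stated
  with \<open>1\<close> would no longer match simplified terms.\<close>

abbreviation unit_index :: "nat \<Rightarrow> nat \<Rightarrow>\<^sub>0 nat" where
  "unit_index j \<equiv> Poly_Mapping.single j (Suc 0)"

definition pconst :: "complex \<Rightarrow> cpoly" where
  "pconst c = monom 0 c"

lemma psmult_eq_pconst_mult: "psmult c f = pconst c * f"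
  unfolding psmult_def pconst_def by (rule mult_map_scale_conv_mult)

lemma pconst_0 [simp]: "pconst 0 = 0"
  by (simp add: pconst_def)

lemma pconst_1 [simp]: "pconst 1 = 1"
  by (simp add: pconst_def)

lemma pconst_add: "pconst (a + b) = pconst a + pconst b"
  by (simp add: pconst_def single_add)

lemma pconst_mult: "pconst (a * b) = pconst a * pconst b"
  by (simp add: pconst_def mult_single)

lemma pconst_uminus: "pconst (- a) = - pconst a"
  by (simp add: pconst_def single_uminus)

lemma pconst_of_nat: "pconst (of_nat k) = of_nat k"
  by (induction k) (simp_all add: pconst_add)

lemma monom_zero_eq_pconst: "monom (0, 0) c = pconst c"
  by (simp add: zero_prod_def pconst_def)

lemma monom_mult: "monom (a, b) c * monom (a', b') c' = monom (a + a', b + b') (c * c')"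
  by (simp add: mult_single)

lemma cpoly_eq_sum_monoms: "f = (\<Sum>m\<in>Poly_Mapping.keys f. monom m (coeff f m))"
  by (rule poly_mapping_eqI)
     (auto simp: lookup_sum lookup_single when_def in_keys_iff sum.delta' intro: sym)

lemma cpoly_monom_induct [case_names zero add]:
  assumes "P 0" and "\<And>m c f. P f \<Longrightarrow> P (monom m c + f)"
  shows "P f"
proof -
  have "P (\<Sum>m\<in>A. monom m (g m))" if "finite A" for A and g :: "mono \<Rightarrow> complex"
    using that by (induction A rule: finite_induct) (auto intro: assms)
  then show ?thesis
    by (subst cpoly_eq_sum_monoms) simp
qed

lemma cpoly_additive_eqI:
  fixes F G :: "cpoly \<Rightarrow> 'b::comm_monoid_add"
  assumes "\<And>f g. F (f + g) = F f + F g" and "\<And>f g. G (f + g) = G f + G g"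
    and "\<And>m c. F (monom m c) = G (monom m c)"
  shows "F f = G f"
proof (induction f rule: cpoly_monom_induct)
  case zero
  show ?case
    using assms(3)[of undefined 0] by simp
qed (simp add: assms)

lemma cpoly_biadditive_eqI:
  fixes F G :: "cpoly \<Rightarrow> cpoly \<Rightarrow> 'b::comm_monoid_add"
  assumes "\<And>f f' g. F (f + f') g = F f g + F f' g" and "\<And>f f' g. G (f + f') g = G f g + G f' g"
    and "\<And>f g g'. F f (g + g') = F f g + F f g'" and "\<And>f g g'. G f (g + g') = G f g + G f g'"
    and "\<And>a b c a' b' c'. F (monom (a, b) c) (monom (a', b') c') = G (monom (a, b) c) (monom (a', b') c')"
  shows "F f g = G f g"
proof (rule cpoly_additive_eqI[where F = "\<lambda>f. F f g" and G = "\<lambda>f. G f g"])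
  fix m :: mono and c :: complex
  obtain a b where m: "m = (a, b)"
    by (cases m)
  show "F (monom m c) g = G (monom m c) g"
    unfolding m
  proof (rule cpoly_additive_eqI[where F = "F (monom (a, b) c)" and G = "G (monom (a, b) c)"])
    fix m' :: mono and c' :: complex
    show "F (monom (a, b) c) (monom m' c') = G (monom (a, b) c) (monom m' c')"
      using assms(5) by (cases m') simp
  qed (use assms in auto)
qed (use assms in auto)

section \<open>Maps defined on monomials: derivatives and conjugations\<close>

definition linmap :: "(mono \<Rightarrow> mono) \<Rightarrow> (mono \<Rightarrow> complex) \<Rightarrow> cpoly \<Rightarrow> cpoly" where
  "linmap \<sigma> w f = (\<Sum>m\<in>Poly_Mapping.keys f. monom (\<sigma> m) (w m * coeff f m))"

lemma linmap_eq_sum_superset: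
  assumes "finite S" and "Poly_Mapping.keys f \<subseteq> S"
  shows "linmap \<sigma> w f = (\<Sum>m\<in>S. monom (\<sigma> m) (w m * coeff f m))"
  unfolding linmap_def
  by (rule sum.mono_neutral_left) (use assms in \<open>auto simp: in_keys_iff\<close>)

lemma linmap_add: "linmap \<sigma> w (f + g) = linmap \<sigma> w f + linmap \<sigma> w g"
proof -
  let ?S = "Poly_Mapping.keys f \<union> Poly_Mapping.keys g"
  have "linmap \<sigma> w (f + g) = (\<Sum>m\<in>?S. monom (\<sigma> m) (w m * coeff (f + g) m))"
    by (rule linmap_eq_sum_superset) (auto simp: keys_add)
  also have "\<dots> = (\<Sum>m\<in>?S. monom (\<sigma> m) (w m * coeff f m)) + (\<Sum>m\<in>?S. monom (\<sigma> m) (w m * coeff g m))"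
    by (simp add: lookup_add distrib_left single_add sum.distrib)
  also have "\<dots> = linmap \<sigma> w f + linmap \<sigma> w g"
    by (simp add: linmap_eq_sum_superset[symmetric])
  finally show ?thesis .
qed

lemma linmap_monom: "linmap \<sigma> w (monom m c) = monom (\<sigma> m) (w m * c)"
  by (cases "c = 0") (simp_all add: linmap_def)

lemma linmap_0: "linmap \<sigma> w 0 = 0"
  by (simp add: linmap_def)

lemma keys_linmap: "Poly_Mapping.keys (linmap \<sigma> w f) \<subseteq> \<sigma> ` {m \<in> Poly_Mapping.keys f. w m \<noteq> 0}"
proof -
  have "Poly_Mapping.keys (linmap \<sigma> w f)
      \<subseteq> (\<Union>m\<in>Poly_Mapping.keys f. Poly_Mapping.keys (monom (\<sigma> m) (w m * coeff f m)))"
    unfolding linmap_def by (rule keys_sum)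
  also have "\<dots> \<subseteq> \<sigma> ` {m \<in> Poly_Mapping.keys f. w m \<noteq> 0}"
    by (auto simp: in_keys_iff split: if_splits)
  finally show ?thesis .
qed

lemma pconst_mult_eq_linmap: "pconst c * f = linmap (\<lambda>m. m) (\<lambda>m. c) f"
  by (rule cpoly_additive_eqI[where F = "\<lambda>f. pconst c * f" and G = "linmap (\<lambda>m. m) (\<lambda>m. c)"])
     (simp_all add: distrib_left linmap_add linmap_monom pconst_def mult_single)

lemma dz_eq_linmap:
  "dz j = linmap (\<lambda>m. (fst m - unit_index j, snd m)) (\<lambda>m. of_nat (Poly_Mapping.lookup (fst m) j))"
  by (rule ext) (simp add: dz_def linmap_def)

lemma dzb_eq_linmap:
  "dzb j = linmap (\<lambda>m. (fst m, snd m - unit_index j)) (\<lambda>m. of_nat (Poly_Mapping.lookup (snd m) j))"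
  by (rule ext) (simp add: dzb_def linmap_def)

lemma compconj_eq_linmap: "compconj = linmap (\<lambda>m. (snd m, fst m)) (\<lambda>m. 1)"
  by (rule ext) (simp add: compconj_def linmap_def)

lemma dz_add: "dz j (f + g) = dz j f + dz j g"
  by (simp add: dz_eq_linmap linmap_add)

lemma dzb_add: "dzb j (f + g) = dzb j f + dzb j g"
  by (simp add: dzb_eq_linmap linmap_add)

lemma compconj_add: "compconj (f + g) = compconj f + compconj g"
  by (simp add: compconj_eq_linmap linmap_add)

lemma dz_0 [simp]: "dz j 0 = 0"
  by (simp add: dz_eq_linmap linmap_0)

lemma dzb_0 [simp]: "dzb j 0 = 0"
  by (simp add: dzb_eq_linmap linmap_0)

lemma compconj_0 [simp]: "compconj 0 = 0"
  by (simp add: compconj_eq_linmap linmap_0)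

lemma dz_monom: "dz j (monom (a, b) c) = monom (a - unit_index j, b) (of_nat (Poly_Mapping.lookup a j) * c)"
  by (simp add: dz_eq_linmap linmap_monom)

lemma dzb_monom: "dzb j (monom (a, b) c) = monom (a, b - unit_index j) (of_nat (Poly_Mapping.lookup b j) * c)"
  by (simp add: dzb_eq_linmap linmap_monom)

lemma compconj_monom: "compconj (monom (a, b) c) = monom (b, a) c"
  by (simp add: compconj_eq_linmap linmap_monom)

lemma pconj_eq_sum_superset:
  assumes "finite S" and "Poly_Mapping.keys f \<subseteq> S"
  shows "pconj f = (\<Sum>m\<in>S. monom (snd m, fst m) (cnj (coeff f m)))"
  unfolding pconj_def
  by (rule sum.mono_neutral_left) (use assms in \<open>auto simp: in_keys_iff\<close>)

lemma pconj_add: "pconj (f + g) = pconj f + pconj g"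
proof -
  let ?S = "Poly_Mapping.keys f \<union> Poly_Mapping.keys g"
  have "pconj (f + g) = (\<Sum>m\<in>?S. monom (snd m, fst m) (cnj (coeff (f + g) m)))"
    by (rule pconj_eq_sum_superset) (auto simp: keys_add)
  also have "\<dots> = (\<Sum>m\<in>?S. monom (snd m, fst m) (cnj (coeff f m)))
      + (\<Sum>m\<in>?S. monom (snd m, fst m) (cnj (coeff g m)))"
    by (simp add: lookup_add single_add sum.distrib)
  also have "\<dots> = pconj f + pconj g"
    by (simp add: pconj_eq_sum_superset[symmetric])
  finally show ?thesis .
qed

lemma pconj_0 [simp]: "pconj 0 = 0"
  by (simp add: pconj_def)

lemma pconj_monom: "pconj (monom (a, b) c) = monom (b, a) (cnj c)"
  by (cases "c = 0") (simp_all add: pconj_def)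

lemma diff_unit_index_add:
  "0 < Poly_Mapping.lookup a j \<Longrightarrow> a - unit_index j + b = a + b - unit_index j"
  by (rule poly_mapping_eqI) (auto simp: lookup_add lookup_minus lookup_single when_def)

lemma dz_mult: "dz j (f * g) = dz j f * g + f * dz j g"
proof (rule cpoly_biadditive_eqI[where F = "\<lambda>f g. dz j (f * g)" and G = "\<lambda>f g. dz j f * g + f * dz j g"])
  fix a b c a' b' c'
  show "dz j (monom (a, b) c * monom (a', b') c') =
      dz j (monom (a, b) c) * monom (a', b') c' + monom (a, b) c * dz j (monom (a', b') c')"
    using diff_unit_index_add[of a j a'] diff_unit_index_add[of a' j a]
    by (cases "Poly_Mapping.lookup a j = 0"; cases "Poly_Mapping.lookup a' j = 0")
       (simp_all add: monom_mult dz_monom lookup_add add.commute algebra_simps flip: single_add)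
qed (simp_all add: dz_add algebra_simps)

lemma compconj_mult: "compconj (f * g) = compconj f * compconj g"
  by (rule cpoly_biadditive_eqI[where F = "\<lambda>f g. compconj (f * g)" and G = "\<lambda>f g. compconj f * compconj g"])
     (simp_all add: compconj_add algebra_simps monom_mult compconj_monom)

lemma pconj_mult: "pconj (f * g) = pconj f * pconj g"
  by (rule cpoly_biadditive_eqI[where F = "\<lambda>f g. pconj (f * g)" and G = "\<lambda>f g. pconj f * pconj g"])
     (simp_all add: pconj_add algebra_simps monom_mult pconj_monom)

lemma compconj_compconj [simp]: "compconj (compconj f) = f"
  by (rule cpoly_additive_eqI[where F = "\<lambda>f. compconj (compconj f)" and G = "\<lambda>f. f"])
     (auto simp: compconj_add compconj_monom)

lemma compconj_dz: "compconj (dz j f) = dzb j (compconj f)"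
  by (rule cpoly_additive_eqI[where F = "\<lambda>f. compconj (dz j f)" and G = "\<lambda>f. dzb j (compconj f)"])
     (auto simp: dz_add dzb_add compconj_add dz_monom dzb_monom compconj_monom)

lemma compconj_dzb: "compconj (dzb j f) = dz j (compconj f)"
  using compconj_dz[of j "compconj f"] by (metis compconj_compconj)

lemma dzb_eq_compconj_dz: "dzb j f = compconj (dz j (compconj f))"
  by (simp add: compconj_dz)

lemma pconj_dz: "pconj (dz j f) = dzb j (pconj f)"
  by (rule cpoly_additive_eqI[where F = "\<lambda>f. pconj (dz j f)" and G = "\<lambda>f. dzb j (pconj f)"])
     (auto simp: dz_add dzb_add pconj_add dz_monom dzb_monom pconj_monom)

lemma pconj_dzb: "pconj (dzb j f) = dz j (pconj f)"
  by (rule cpoly_additive_eqI[where F = "\<lambda>f. pconj (dzb j f)" and G = "\<lambda>f. dz j (pconj f)"])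
     (auto simp: dz_add dzb_add pconj_add dz_monom dzb_monom pconj_monom)

lemma pconj_compconj: "pconj (compconj f) = compconj (pconj f)"
  by (rule cpoly_additive_eqI[where F = "\<lambda>f. pconj (compconj f)" and G = "\<lambda>f. compconj (pconj f)"])
     (auto simp: compconj_add pconj_add compconj_monom pconj_monom)

lemma dzb_mult: "dzb j (f * g) = dzb j f * g + f * dzb j g"
  by (simp add: dzb_eq_compconj_dz compconj_mult dz_mult compconj_add)

lemma dz_dz_commute: "dz i (dz j f) = dz j (dz i f)"
  by (rule cpoly_additive_eqI[where F = "\<lambda>f. dz i (dz j f)" and G = "\<lambda>f. dz j (dz i f)"])
     (auto simp: dz_add dz_monom lookup_minus lookup_single when_def mult_ac diff_right_commute)

lemma dzb_dzb_commute: "dzb i (dzb j f) = dzb j (dzb i f)"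
  by (simp add: dzb_eq_compconj_dz dz_dz_commute)

lemma dz_dzb_commute: "dz i (dzb j f) = dzb j (dz i f)"
  by (rule cpoly_additive_eqI[where F = "\<lambda>f. dz i (dzb j f)" and G = "\<lambda>f. dzb j (dz i f)"])
     (auto simp: dz_add dzb_add dz_monom dzb_monom mult_ac)

definition zvar :: "nat \<Rightarrow> cpoly" where
  "zvar k = monom (unit_index k, 0) 1"

definition zbvar :: "nat \<Rightarrow> cpoly" where
  "zbvar k = monom (0, unit_index k) 1"

lemma dz_pconst [simp]: "dz j (pconst c) = 0"
  using dz_monom[of j 0 0 c] by (simp add: monom_zero_eq_pconst)

lemma dzb_pconst [simp]: "dzb j (pconst c) = 0"
  using dzb_monom[of j 0 0 c] by (simp add: monom_zero_eq_pconst)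

lemma dz_of_nat [simp]: "dz j (of_nat k) = 0"
  using dz_pconst[of j "of_nat k"] by (simp add: pconst_of_nat)

lemma dz_zvar: "dz j (zvar k) = (if j = k then 1 else 0)"
  by (simp add: zvar_def dz_monom lookup_single monom_zero_eq_pconst)

lemma dz_zbvar [simp]: "dz j (zbvar k) = 0"
  by (simp add: zbvar_def dz_monom)

lemma dzb_zvar [simp]: "dzb j (zvar k) = 0"
  by (simp add: zvar_def dzb_monom)

lemma compconj_pconst [simp]: "compconj (pconst c) = pconst c"
  using compconj_monom[of 0 0 c] by (simp add: monom_zero_eq_pconst)

lemma compconj_zvar [simp]: "compconj (zvar k) = zbvar k"
  by (simp add: zvar_def zbvar_def compconj_monom)

lemma compconj_zbvar [simp]: "compconj (zbvar k) = zvar k"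
  by (simp add: zvar_def zbvar_def compconj_monom)

lemma pconj_pconst: "pconj (pconst c) = pconst (cnj c)"
  using pconj_monom[of 0 0 c] by (simp add: monom_zero_eq_pconst)

lemma dz_pconst_mult: "dz j (pconst c * f) = pconst c * dz j f"
  by (simp add: dz_mult)

lemma dzb_pconst_mult: "dzb j (pconst c * f) = pconst c * dzb j f"
  by (simp add: dzb_mult)

lemma dz_zvar_mult: "dz j (zvar k * f) = (if j = k then f else 0) + zvar k * dz j f"
  by (simp add: dz_mult dz_zvar)

lemma dz_zbvar_mult: "dz j (zbvar k * f) = zbvar k * dz j f"
  by (simp add: dz_mult)

lemma dzb_zvar_mult: "dzb j (zvar k * f) = zvar k * dzb j f"
  by (simp add: dzb_mult)

section \<open>Multi-indices and iterated derivatives\<close>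

lemma keys_add_unit_index: "Poly_Mapping.keys (K + unit_index k) = insert k (Poly_Mapping.keys K)"
  by (auto simp: in_keys_iff lookup_add lookup_single when_def split: if_splits)

lemma lookup_add_unit_index:
  "Poly_Mapping.lookup (K + unit_index j) k = Poly_Mapping.lookup K k + (if j = k then 1 else 0)"
  by (simp add: lookup_add lookup_single when_def)

lemma lookup_add_unit_index_same: "Poly_Mapping.lookup (K + unit_index k) k = Suc (Poly_Mapping.lookup K k)"
  by (simp add: lookup_add_unit_index)

lemma diff_add_unit_index: "0 < Poly_Mapping.lookup K k \<Longrightarrow> K - unit_index k + unit_index k = K"
  by (rule poly_mapping_eqI) (auto simp: lookup_add lookup_minus lookup_single when_def)

lemma keys_diff_unit_index: "Poly_Mapping.keys (a - unit_index j) \<subseteq> Poly_Mapping.keys a"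
  by (auto simp: in_keys_iff lookup_minus)

lemma mabs_eq_sum_superset:
  "finite S \<Longrightarrow> Poly_Mapping.keys K \<subseteq> S \<Longrightarrow> mabs K = (\<Sum>j\<in>S. Poly_Mapping.lookup K j)"
  unfolding mabs_def by (rule sum.mono_neutral_left) (auto simp: in_keys_iff)

lemma mfact_eq_prod_superset:
  "finite S \<Longrightarrow> Poly_Mapping.keys K \<subseteq> S \<Longrightarrow> mfact K = (\<Prod>j\<in>S. fact (Poly_Mapping.lookup K j))"
  unfolding mfact_def by (rule prod.mono_neutral_left) (auto simp: in_keys_iff)

lemma mabs_0 [simp]: "mabs 0 = 0"
  by (simp add: mabs_def)

lemma mfact_0 [simp]: "mfact 0 = 1"
  by (simp add: mfact_def)

lemma mfact_pos: "0 < mfact K"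
  by (simp add: mfact_def)

lemma mabs_add_unit_index: "mabs (K + unit_index k) = Suc (mabs K)"
proof -
  let ?S = "insert k (Poly_Mapping.keys K)"
  have "mabs (K + unit_index k) = (\<Sum>j\<in>?S. Poly_Mapping.lookup K j + (if k = j then 1 else 0))"
    by (simp add: mabs_eq_sum_superset[of ?S] keys_add_unit_index lookup_add_unit_index)
  also have "\<dots> = Suc (\<Sum>j\<in>?S. Poly_Mapping.lookup K j)"
    by (simp add: sum.distrib)
  also have "(\<Sum>j\<in>?S. Poly_Mapping.lookup K j) = mabs K"
    by (rule mabs_eq_sum_superset[symmetric]) auto
  finally show ?thesis .
qed

lemma mfact_add_unit_index: "mfact (K + unit_index k) = mfact K * Suc (Poly_Mapping.lookup K k)"
proof -
  let ?S = "insert k (Poly_Mapping.keys K)"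
  have "mfact (K + unit_index k) = (\<Prod>j\<in>?S. fact (Poly_Mapping.lookup K j + (if k = j then 1 else 0)))"
    by (simp add: mfact_eq_prod_superset[of ?S] keys_add_unit_index lookup_add_unit_index)
  also have "\<dots> = fact (Suc (Poly_Mapping.lookup K k)) * (\<Prod>j\<in>?S - {k}. fact (Poly_Mapping.lookup K j))"
    by (subst prod.remove[of _ k]) (auto intro!: prod.cong)
  also have "\<dots> = Suc (Poly_Mapping.lookup K k)
      * (fact (Poly_Mapping.lookup K k) * (\<Prod>j\<in>?S - {k}. fact (Poly_Mapping.lookup K j)))"
    by (simp add: algebra_simps)
  also have "fact (Poly_Mapping.lookup K k) * (\<Prod>j\<in>?S - {k}. fact (Poly_Mapping.lookup K j)) = mfact K"
    by (subst mfact_eq_prod_superset[of ?S]) (auto simp: prod.remove[of ?S k])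
  finally show ?thesis
    by simp
qed

lemma multi_index_induct [case_names zero add_unit_index]:
  assumes "P 0" and "\<And>K k. P K \<Longrightarrow> P (K + unit_index k)"
  shows "P K"
proof (induction "mabs K" arbitrary: K)
  case 0
  then have "K = 0"
    by (auto simp: mabs_def in_keys_iff intro!: poly_mapping_eqI)
  then show ?case
    using assms by simp
next
  case (Suc d)
  then obtain k where "k \<in> Poly_Mapping.keys K"
    by (metis keys_eq_empty ex_in_conv mabs_0 nat.distinct(1))
  then have k: "0 < Poly_Mapping.lookup K k"
    by (simp add: in_keys_iff)
  have "mabs (K - unit_index k) = d"
    using mabs_add_unit_index[of "K - unit_index k" k] diff_add_unit_index[OF k] Suc by simp
  then have "P (K - unit_index k)"
    using Suc(1) by simp
  then have "P (K - unit_index k + unit_index k)"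
    by (rule assms(2))
  then show ?case
    using diff_add_unit_index[OF k] by simp
qed

definition multi_funpow :: "(nat \<Rightarrow> 'a \<Rightarrow> 'a) \<Rightarrow> (nat \<Rightarrow>\<^sub>0 nat) \<Rightarrow> 'a \<Rightarrow> 'a" where
  "multi_funpow d K x =
     fold (\<lambda>j y. (d j ^^ Poly_Mapping.lookup K j) y) (sorted_list_of_set (Poly_Mapping.keys K)) x"

definition pairwise_commuting :: "(nat \<Rightarrow> 'a \<Rightarrow> 'a) \<Rightarrow> bool" where
  "pairwise_commuting d \<longleftrightarrow> (\<forall>i j. d i \<circ> d j = d j \<circ> d i)"

lemma dzK_eq_multi_funpow: "dzK = multi_funpow dz"
  by (intro ext) (simp add: dzK_def multi_funpow_def)

lemma dzbK_eq_multi_funpow: "dzbK = multi_funpow dzb"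
  by (intro ext) (simp add: dzbK_def multi_funpow_def)

lemma pairwise_commuting_dz: "pairwise_commuting dz"
  by (simp add: pairwise_commuting_def fun_eq_iff dz_dz_commute)

lemma pairwise_commuting_dzb: "pairwise_commuting dzb"
  by (simp add: pairwise_commuting_def fun_eq_iff dzb_dzb_commute)

lemma multi_funpow_0 [simp]: "multi_funpow d 0 x = x"
  by (simp add: multi_funpow_def)

lemma comp_fun_commute_funpow_family:
  "pairwise_commuting d \<Longrightarrow> comp_fun_commute (\<lambda>j. d j ^^ e j)"
  by (rule comp_fun_commute.comp_fun_commute_funpow)
     (simp add: pairwise_commuting_def comp_fun_commute_def)

lemma multi_funpow_eq_fold:
  assumes "pairwise_commuting d"
  shows "multi_funpow d K x = Finite_Set.fold (\<lambda>j. d j ^^ Poly_Mapping.lookup K j) x (Poly_Mapping.keys K)"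
proof -
  interpret comp_fun_commute "\<lambda>j. d j ^^ Poly_Mapping.lookup K j"
    using assms by (rule comp_fun_commute_funpow_family)
  have "Finite_Set.fold (\<lambda>j. d j ^^ Poly_Mapping.lookup K j) x (set (sorted_list_of_set (Poly_Mapping.keys K)))
      = fold (\<lambda>j. d j ^^ Poly_Mapping.lookup K j) (remdups (sorted_list_of_set (Poly_Mapping.keys K))) x"
    by (rule fold_set_fold_remdups)
  then show ?thesis
    by (simp add: multi_funpow_def distinct_remdups_id)
qed

lemma multi_funpow_split:
  assumes "pairwise_commuting d"
  shows "multi_funpow d K x = (d k ^^ Poly_Mapping.lookup K k)
     (Finite_Set.fold (\<lambda>j. d j ^^ Poly_Mapping.lookup K j) x (Poly_Mapping.keys K - {k}))"
proof -
  interpret comp_fun_commute "\<lambda>j. d j ^^ Poly_Mapping.lookup K j"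
    using assms by (rule comp_fun_commute_funpow_family)
  show ?thesis
  proof (cases "k \<in> Poly_Mapping.keys K")
    case True
    then show ?thesis
      by (simp add: multi_funpow_eq_fold[OF assms] fold_rec[of _ k])
  next
    case False
    then show ?thesis
      by (simp add: multi_funpow_eq_fold[OF assms] in_keys_iff)
  qed
qed

lemma multi_funpow_add_unit_index:
  assumes "pairwise_commuting d"
  shows "multi_funpow d (K + unit_index k) x = d k (multi_funpow d K x)"
proof -
  let ?A = "Poly_Mapping.keys K - {k}"
  have "Finite_Set.fold (\<lambda>j. d j ^^ Poly_Mapping.lookup (K + unit_index k) j) x ?A
      = Finite_Set.fold (\<lambda>j. d j ^^ Poly_Mapping.lookup K j) x ?A"
    by (intro Finite_Set.fold_cong[where S = UNIV])
       (use comp_fun_commute_funpow_family[OF assms] in \<open>auto simp: comp_fun_commute_def' lookup_add_unit_index\<close>)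
  then show ?thesis
    using multi_funpow_split[OF assms, of "K + unit_index k" x k] multi_funpow_split[OF assms, of K x k]
    by (simp add: keys_add_unit_index lookup_add_unit_index)
qed

lemma multi_funpow_commute:
  assumes "pairwise_commuting d" and "\<And>j x. Q (d j x) = d j (Q x)"
  shows "Q (multi_funpow d K x) = multi_funpow d K (Q x)"
  by (induction K rule: multi_index_induct) (simp_all add: multi_funpow_add_unit_index[OF assms(1)] assms(2))

lemma dzK_zero_index [simp]: "dzK 0 f = f"
  by (simp add: dzK_eq_multi_funpow)

lemma dzbK_zero_index [simp]: "dzbK 0 f = f"
  by (simp add: dzbK_eq_multi_funpow)

lemma dzK_add_unit_index: "dzK (K + unit_index k) f = dz k (dzK K f)"
  by (simp add: dzK_eq_multi_funpow multi_funpow_add_unit_index[OF pairwise_commuting_dz])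

lemma dz_dzK: "dz i (dzK K f) = dzK K (dz i f)"
  unfolding dzK_eq_multi_funpow
  by (rule multi_funpow_commute[OF pairwise_commuting_dz]) (simp add: dz_dz_commute)

lemma dzb_dzK: "dzb i (dzK K f) = dzK K (dzb i f)"
  unfolding dzK_eq_multi_funpow
  by (rule multi_funpow_commute[OF pairwise_commuting_dz]) (simp add: dz_dzb_commute)

lemma dz_dzbK: "dz i (dzbK K f) = dzbK K (dz i f)"
  unfolding dzbK_eq_multi_funpow
  by (rule multi_funpow_commute[OF pairwise_commuting_dzb]) (simp add: dz_dzb_commute)

lemma dzb_dzbK: "dzb i (dzbK K f) = dzbK K (dzb i f)"
  unfolding dzbK_eq_multi_funpow
  by (rule multi_funpow_commute[OF pairwise_commuting_dzb]) (simp add: dzb_dzb_commute)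

lemma dzbK_add_unit_index: "dzbK (K + unit_index k) f = dzbK K (dzb k f)"
  by (simp add: dzbK_eq_multi_funpow multi_funpow_add_unit_index[OF pairwise_commuting_dzb]
      dzb_dzbK[unfolded dzbK_eq_multi_funpow])

lemma dzK_add: "dzK K (f + g) = dzK K f + dzK K g"
  by (induction K rule: multi_index_induct) (simp_all add: dzK_add_unit_index dz_add)

lemma dzK_zero [simp]: "dzK K 0 = 0"
  using dzK_add[of K 0 0] by simp

lemma dzK_pconst_mult: "dzK K (pconst c * f) = pconst c * dzK K f"
  unfolding dzK_eq_multi_funpow
  by (rule multi_funpow_commute[OF pairwise_commuting_dz, symmetric]) (simp add: dz_pconst_mult)

lemma dzK_zbvar_mult: "dzK K (zbvar k * f) = zbvar k * dzK K f"
  unfolding dzK_eq_multi_funpow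
  by (rule multi_funpow_commute[OF pairwise_commuting_dz, symmetric]) (simp add: dz_zbvar_mult)

lemma dzK_pconst: "dzK K (pconst c) = (if K = 0 then pconst c else 0)"
proof (induction K rule: multi_index_induct)
  case (add_unit_index K k)
  have "K + unit_index k \<noteq> 0"
    using lookup_add_unit_index[of K k k] by auto
  then show ?case
    using add_unit_index by (simp add: dzK_add_unit_index)
qed simp

lemma dzK_zvar_mult:
  "dzK K (zvar k * g) = zvar k * dzK K g + of_nat (Poly_Mapping.lookup K k) * dzK (K - unit_index k) g"
proof (induction K rule: multi_index_induct)
  case (add_unit_index K j)
  let ?l = "Poly_Mapping.lookup K k"
  have "dzK (K + unit_index j) (zvar k * g)
      = (if j = k then dzK K g else 0) + zvar k * dzK (K + unit_index j) g
        + of_nat ?l * dz j (dzK (K - unit_index k) g)"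
    by (simp add: add_unit_index dzK_add_unit_index dz_add dz_zvar_mult dz_mult dz_zvar)
  also have "\<dots> = zvar k * dzK (K + unit_index j) g
      + of_nat (Poly_Mapping.lookup (K + unit_index j) k) * dzK (K + unit_index j - unit_index k) g"
  proof (cases "?l = 0")
    case True
    then show ?thesis
      by (cases "j = k") (simp_all add: dzK_add_unit_index lookup_add_unit_index)
  next
    case False
    then have pos: "0 < ?l"
      by simp
    show ?thesis
    proof (cases "j = k")
      case True
      have "dz k (dzK (K - unit_index k) g) = dzK K g"
        using dzK_add_unit_index[of "K - unit_index k" k g] diff_add_unit_index[OF pos] by simp
      then show ?thesis
        using True by (simp add: lookup_add_unit_index algebra_simps)
    next
      case False
      then have "K + unit_index j - unit_index k = K - unit_index k + unit_index j"
        using pos by (intro poly_mapping_eqI) (auto simp: lookup_add lookup_minus lookup_single when_def)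
      then show ?thesis
        using False by (simp add: dzK_add_unit_index lookup_add_unit_index)
    qed
  qed
  finally show ?case .
qed simp

lemma dzK_monom:
  "\<exists>x. dzK K (monom (a, b) c) = monom (a - K, b) x
     \<and> (x \<noteq> 0 \<longrightarrow> (\<forall>j. Poly_Mapping.lookup K j \<le> Poly_Mapping.lookup a j))"
proof (induction K rule: multi_index_induct)
  case (add_unit_index K k)
  then obtain x where x: "dzK K (monom (a, b) c) = monom (a - K, b) x"
    and le: "x \<noteq> 0 \<longrightarrow> (\<forall>j. Poly_Mapping.lookup K j \<le> Poly_Mapping.lookup a j)"
    by blast
  let ?y = "of_nat (Poly_Mapping.lookup (a - K) k) * x"
  have "dzK (K + unit_index k) (monom (a, b) c) = monom (a - (K + unit_index k), b) ?y"
    by (simp add: dzK_add_unit_index x dz_monom diff_diff_add)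
  moreover have "?y \<noteq> 0 \<longrightarrow> (\<forall>j. Poly_Mapping.lookup (K + unit_index k) j \<le> Poly_Mapping.lookup a j)"
    using le by (auto simp: lookup_minus lookup_add_unit_index)
  ultimately show ?case
    by blast
qed auto

lemma dzK_sum: "dzK K (sum F A) = (\<Sum>m\<in>A. dzK K (F m))"
  by (induction A rule: infinite_finite_induct) (simp_all add: dzK_add)

lemma dzK_nonzero_imp_le:
  assumes "dzK K g \<noteq> 0"
  shows "\<exists>m\<in>Poly_Mapping.keys g. \<forall>j. Poly_Mapping.lookup K j \<le> Poly_Mapping.lookup (fst m) j"
proof (rule ccontr)
  assume not_le: "\<not> ?thesis"
  have "dzK K (monom m (coeff g m)) = 0" if "m \<in> Poly_Mapping.keys g" for m
    using dzK_monom[of K "fst m" "snd m" "coeff g m"] not_le that by auto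
  then have "dzK K g = 0"
    by (subst cpoly_eq_sum_monoms) (simp add: dzK_sum)
  then show False
    using assms by simp
qed

lemma finite_pointwise_le: "finite {K :: nat \<Rightarrow>\<^sub>0 nat. \<forall>j. Poly_Mapping.lookup K j \<le> Poly_Mapping.lookup a j}"
proof -
  let ?S = "{K :: nat \<Rightarrow>\<^sub>0 nat. \<forall>j. Poly_Mapping.lookup K j \<le> Poly_Mapping.lookup a j}"
  have "Poly_Mapping.lookup a j \<le> mabs a" for j
    by (cases "j \<in> Poly_Mapping.keys a") (auto simp: mabs_def in_keys_iff intro: member_le_sum)
  then have "Poly_Mapping.lookup ` ?S \<subseteq> {\<phi>. \<forall>j. (j \<in> Poly_Mapping.keys a \<longrightarrow> \<phi> j \<in> {..mabs a})
      \<and> (j \<notin> Poly_Mapping.keys a \<longrightarrow> \<phi> j = 0)}"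
    by (auto simp: in_keys_iff) (metis le_trans, metis le_zero_eq)
  then have "finite (Poly_Mapping.lookup ` ?S)"
    by (rule finite_subset) (rule finite_set_of_finite_funs; simp)
  then show ?thesis
    by (rule finite_imageD) (simp add: inj_on_def)
qed

lemma finite_dzK_nonzero: "finite {K. dzK K g \<noteq> 0}"
proof (rule finite_subset)
  show "{K. dzK K g \<noteq> 0} \<subseteq> (\<Union>m\<in>Poly_Mapping.keys g.
      {K. \<forall>j. Poly_Mapping.lookup K j \<le> Poly_Mapping.lookup (fst m) j})"
    using dzK_nonzero_imp_le by blast
qed (simp add: finite_pointwise_le)

section \<open>The Wick product\<close>

lemma Sum_any_additive:
  assumes "additive L" and "finite {x. F x \<noteq> 0}"
  shows "L (Sum_any F) = Sum_any (\<lambda>x. L (F x))"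
proof -
  have "Sum_any (\<lambda>x. L (F x)) = (\<Sum>x\<in>{x. F x \<noteq> 0}. L (F x))"
    by (rule Sum_any.expand_superset) (use assms(2) additive.zero[OF assms(1)] in auto)
  then show ?thesis
    by (simp add: Sum_any.expand_set additive.sum[OF assms(1)])
qed

lemma Sum_any_shift_unit_index:
  fixes B :: "(nat \<Rightarrow>\<^sub>0 nat) \<Rightarrow> 'a::comm_monoid_add"
  assumes "\<And>K. Poly_Mapping.lookup K k = 0 \<Longrightarrow> B K = 0"
  shows "Sum_any B = Sum_any (\<lambda>K. B (K + unit_index k))"
proof -
  let ?shift = "\<lambda>K. K + unit_index k"
  have "{K. B K \<noteq> 0} = ?shift ` {K. B (K + unit_index k) \<noteq> 0}"
  proof (intro set_eqI iffI)
    fix K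
    assume "K \<in> {K. B K \<noteq> 0}"
    then have "B K \<noteq> 0" and "0 < Poly_Mapping.lookup K k"
      using assms by (auto intro: gr0I)
    then show "K \<in> ?shift ` {K. B (K + unit_index k) \<noteq> 0}"
      using diff_add_unit_index by (intro image_eqI[of _ _ "K - unit_index k"]) auto
  qed auto
  then have "Sum_any B = sum (B \<circ> ?shift) {K. B (K + unit_index k) \<noteq> 0}"
    by (simp add: Sum_any.expand_set sum.reindex inj_on_def)
  then show ?thesis
    by (simp add: Sum_any.expand_set comp_def)
qed

definition wick_coeff :: "real \<Rightarrow> (nat \<Rightarrow>\<^sub>0 nat) \<Rightarrow> complex" where
  "wick_coeff s K = complex_of_real (s ^ mabs K / real (mfact K))"

lemma wick_coeff_zero_index [simp]: "wick_coeff s 0 = 1"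
  by (simp add: wick_coeff_def)

lemma wick_coeff_add_unit_index:
  "wick_coeff s (K + unit_index k) * of_nat (Suc (Poly_Mapping.lookup K k)) = of_real s * wick_coeff s K"
proof -
  have "s ^ Suc (mabs K) / real (mfact K * Suc (Poly_Mapping.lookup K k)) * real (Suc (Poly_Mapping.lookup K k))
      = s * (s ^ mabs K / real (mfact K))"
    using mfact_pos[of K] by (simp only: of_nat_mult) (simp del: of_nat_Suc)
  from arg_cong[OF this, of complex_of_real] show ?thesis
    by (simp only: wick_coeff_def mabs_add_unit_index mfact_add_unit_index of_real_mult of_real_of_nat_eq)
qed

lemma wick_term_eq: "wick_term s f g K = pconst (wick_coeff s K) * (dzbK K f * dzK K g)"
  by (simp add: wick_term_def wick_coeff_def psmult_eq_pconst_mult)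

lemma wick_eq_Sum_any: "wick s f g = Sum_any (wick_term s f g)"
  by (simp add: wick_def Sum_any.expand_set)

lemma finite_wick_term_nonzero: "finite {K. wick_term s f g K \<noteq> 0}"
  by (rule finite_subset[OF _ finite_dzK_nonzero[of g]]) (auto simp: wick_term_eq)

lemma wick_pconst_right: "wick s f (pconst c) = pconst c * f"
proof -
  have "wick s f (pconst c) = sum (wick_term s f (pconst c)) {0}"
    unfolding wick_eq_Sum_any
    by (rule Sum_any.expand_superset) (auto simp: wick_term_eq dzK_pconst split: if_splits)
  then show ?thesis
    by (simp add: wick_term_eq dzK_pconst mult.commute)
qed

lemma wick_add_right: "wick s f (g + g') = wick s f g + wick s f g'"
  unfolding wick_eq_Sum_any
  by (simp add: wick_term_eq dzK_add distrib_left Sum_any.distrib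
      finite_wick_term_nonzero[unfolded wick_term_eq])

lemma wick_mult_right:
  assumes "\<And>K g. dzK K (p * g) = p * dzK K g"
  shows "wick s f (p * g) = p * wick s f g"
proof -
  have "wick s f (p * g) = Sum_any (\<lambda>K. p * wick_term s f g K)"
    unfolding wick_eq_Sum_any by (simp add: wick_term_eq assms mult.left_commute)
  also have "\<dots> = p * wick s f g"
    unfolding wick_eq_Sum_any by (rule Sum_any_right_distrib[OF finite_wick_term_nonzero, symmetric])
  finally show ?thesis .
qed

lemma wick_pconst_mult_right: "wick s f (pconst c * g) = pconst c * wick s f g"
  by (rule wick_mult_right) (rule dzK_pconst_mult)

lemma wick_zbvar_right: "wick s f (zbvar k * g) = zbvar k * wick s f g"
  by (rule wick_mult_right) (rule dzK_zbvar_mult)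

lemma wick_zvar_right:
  "wick s f (zvar k * g) = zvar k * wick s f g + pconst (of_real s) * wick s (dzb k f) g"
proof -
  txt \<open>\<open>B\<close> collects the terms of \<open>dzK K (zvar k * g)\<close> in which \<open>zvar k\<close> is differentiated.
    After the shift \<open>K \<mapsto> K + unit_index k\<close>, \<open>wick_coeff_add_unit_index\<close> turns their
    factor \<open>K\<^sub>k + 1\<close> into \<open>s\<close>.\<close>
  define B where "B K = pconst (wick_coeff s K)
      * (of_nat (Poly_Mapping.lookup K k) * (dzbK K f * dzK (K - unit_index k) g))" for K
  have B_eq: "B K = wick_term s f (zvar k * g) K - zvar k * wick_term s f g K" for K
    by (simp only: B_def wick_term_eq dzK_zvar_mult) (simp add: algebra_simps)
  have fin_B: "finite {K. B K \<noteq> 0}"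
    by (rule finite_subset[of _ "{K. wick_term s f (zvar k * g) K \<noteq> 0} \<union> {K. wick_term s f g K \<noteq> 0}"])
       (auto simp: B_eq finite_wick_term_nonzero)
  have fin_zB: "finite {K. zvar k * wick_term s f g K \<noteq> 0}"
    by (rule finite_subset[OF _ finite_wick_term_nonzero[of s f g]]) auto
  have "wick s f (zvar k * g) = Sum_any (\<lambda>K. zvar k * wick_term s f g K + B K)"
    unfolding wick_eq_Sum_any by (simp add: B_eq)
  also have "\<dots> = zvar k * wick s f g + Sum_any B"
    unfolding Sum_any.distrib[OF fin_zB fin_B] wick_eq_Sum_any
    by (simp add: Sum_any_right_distrib finite_wick_term_nonzero)
  also have "Sum_any B = Sum_any (\<lambda>K. B (K + unit_index k))"
    by (rule Sum_any_shift_unit_index) (simp add: B_def)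
  also have "\<dots> = Sum_any (\<lambda>K. pconst (of_real s) * wick_term s (dzb k f) g K)"
  proof (rule Sum_any.cong)
    fix K
    have "B (K + unit_index k) = pconst (wick_coeff s (K + unit_index k) * of_nat (Suc (Poly_Mapping.lookup K k)))
        * (dzbK K (dzb k f) * dzK K g)"
      by (simp only: B_def lookup_add_unit_index_same add_diff_cancel_right' dzbK_add_unit_index
          pconst_mult pconst_of_nat mult.assoc)
    then show "B (K + unit_index k) = pconst (of_real s) * wick_term s (dzb k f) g K"
      by (simp only: wick_coeff_add_unit_index pconst_mult wick_term_eq mult.assoc)
  qed
  also have "\<dots> = pconst (of_real s) * wick s (dzb k f) g"
    unfolding wick_eq_Sum_any by (rule Sum_any_right_distrib[OF finite_wick_term_nonzero, symmetric])
  finally show ?thesis .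
qed

lemma wick_derivation:
  assumes "additive D" and "\<And>f g. D (f * g) = D f * g + f * D g" and "\<And>c. D (pconst c) = 0"
    and "\<And>K f. D (dzK K f) = dzK K (D f)" and "\<And>K f. D (dzbK K f) = dzbK K (D f)"
  shows "D (wick s f g) = wick s (D f) g + wick s f (D g)"
proof -
  have "D (wick s f g) = Sum_any (\<lambda>K. D (wick_term s f g K))"
    unfolding wick_eq_Sum_any by (rule Sum_any_additive[OF assms(1) finite_wick_term_nonzero])
  also have "\<dots> = Sum_any (\<lambda>K. wick_term s (D f) g K + wick_term s f (D g) K)"
    by (simp add: wick_term_eq assms(2-5) distrib_left)
  also have "\<dots> = wick s (D f) g + wick s f (D g)"
    unfolding wick_eq_Sum_any by (rule Sum_any.distrib[OF finite_wick_term_nonzero finite_wick_term_nonzero])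
  finally show ?thesis .
qed

lemma dz_wick: "dz k (wick s f g) = wick s (dz k f) g + wick s f (dz k g)"
  by (rule wick_derivation) (simp_all add: additive_def dz_add dz_mult dz_dzK dz_dzbK)

lemma dzb_wick: "dzb k (wick s f g) = wick s (dzb k f) g + wick s f (dzb k g)"
  by (rule wick_derivation) (simp_all add: additive_def dzb_add dzb_mult dzb_dzK dzb_dzbK)

section \<open>The Laplacian and its exponential\<close>

lemma lap_commute:
  assumes "additive Q" and "\<And>j f. Q (dz j (dzb j f)) = dz j (dzb j (Q f))"
  shows "Q (lap n f) = lap n (Q f)"
  by (simp add: lap_def additive.sum[OF assms(1)] assms(2))

lemma lap_add: "lap n (f + g) = lap n f + lap n g"
  by (simp add: lap_def dz_add dzb_add sum.distrib)

lemma lap_0 [simp]: "lap n 0 = 0"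
  by (simp add: lap_def)

lemma lap_dz: "lap n (dz k f) = dz k (lap n f)"
  by (rule lap_commute[symmetric]) (simp_all add: additive_def dz_add dz_dz_commute dz_dzb_commute)

lemma lap_dzb: "lap n (dzb k f) = dzb k (lap n f)"
  by (rule lap_commute[symmetric])
     (simp_all add: additive_def dzb_add dzb_dzb_commute flip: dz_dzb_commute)

lemma lap_pconst_mult: "lap n (pconst c * f) = pconst c * lap n f"
  by (rule lap_commute[symmetric])
     (simp_all add: additive_def distrib_left dz_pconst_mult dzb_pconst_mult)

lemma lap_of_nat_mult: "lap n (of_nat j * f) = of_nat j * lap n f"
  using lap_pconst_mult[of n "of_nat j" f] by (simp add: pconst_of_nat)

lemma lap_compconj: "lap n (compconj f) = compconj (lap n f)"
  by (rule lap_commute[symmetric])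
     (simp_all add: additive_def compconj_add compconj_dz compconj_dzb dz_dzb_commute)

lemma lap_pconj: "lap n (pconj f) = pconj (lap n f)"
  by (rule lap_commute[symmetric])
     (simp_all add: additive_def pconj_add pconj_dz pconj_dzb dz_dzb_commute)

lemma lap_pow_add: "(lap n ^^ k) (f + g) = (lap n ^^ k) f + (lap n ^^ k) g"
  by (induction k) (simp_all add: lap_add)

lemma lap_pow_zero [simp]: "(lap n ^^ k) 0 = 0"
  by (induction k) simp_all

lemma lap_zvar: "k \<le> n \<Longrightarrow> lap n (zvar k * u) = zvar k * lap n u + dzb k u"
  by (simp add: lap_def dzb_zvar_mult dz_zvar_mult sum.distrib sum_distrib_left)

lemma lap_pow_zvar:
  assumes "k \<le> n"
  shows "(lap n ^^ Suc m) (zvar k * u) = zvar k * (lap n ^^ Suc m) u + of_nat (Suc m) * dzb k ((lap n ^^ m) u)"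
proof (induction m)
  case 0
  show ?case
    using assms by (simp add: lap_zvar)
next
  case (Suc m)
  have "(lap n ^^ Suc (Suc m)) (zvar k * u) = lap n ((lap n ^^ Suc m) (zvar k * u))"
    by simp
  also have "\<dots> = zvar k * lap n ((lap n ^^ Suc m) u) + dzb k ((lap n ^^ Suc m) u)
      + of_nat (Suc m) * dzb k (lap n ((lap n ^^ m) u))"
    using assms by (simp only: Suc lap_add lap_zvar lap_of_nat_mult lap_dzb)
  finally show ?case
    by (simp add: algebra_simps)
qed

lemma keys_dz_fst_smaller:
  assumes "m \<in> Poly_Mapping.keys (dz j f)"
  shows "\<exists>m'\<in>Poly_Mapping.keys f. mabs (fst m) < mabs (fst m')"
proof -
  obtain m' where m': "m' \<in> Poly_Mapping.keys f" "0 < Poly_Mapping.lookup (fst m') j"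
    and m: "m = (fst m' - unit_index j, snd m')"
    using subsetD[OF keys_linmap assms[unfolded dz_eq_linmap]] by auto
  have "mabs (fst m') = Suc (mabs (fst m))"
    using mabs_add_unit_index[of "fst m' - unit_index j" j] diff_add_unit_index[OF m'(2)] m by simp
  then show ?thesis
    using m'(1) by (metis lessI)
qed

lemma keys_dzb_fst:
  assumes "m \<in> Poly_Mapping.keys (dzb j f)"
  shows "\<exists>m'\<in>Poly_Mapping.keys f. fst m = fst m'"
  using subsetD[OF keys_linmap assms[unfolded dzb_eq_linmap]] by force

lemma keys_lap_fst_smaller:
  assumes "m \<in> Poly_Mapping.keys (lap n f)"
  shows "\<exists>m'\<in>Poly_Mapping.keys f. mabs (fst m) < mabs (fst m')"
proof -
  obtain j where "m \<in> Poly_Mapping.keys (dz j (dzb j f))"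
    using subsetD[OF keys_sum assms[unfolded lap_def]] by blast
  then obtain m1 where "m1 \<in> Poly_Mapping.keys (dzb j f)" and "mabs (fst m) < mabs (fst m1)"
    using keys_dz_fst_smaller by blast
  then show ?thesis
    using keys_dzb_fst by metis
qed

lemma lap_pow_eq_0:
  assumes "\<forall>m\<in>Poly_Mapping.keys f. mabs (fst m) < N"
  shows "(lap n ^^ N) f = 0"
  using assms
proof (induction N arbitrary: f)
  case 0
  then have "Poly_Mapping.keys f = {}"
    by blast
  then show ?case
    by (simp only: keys_eq_empty funpow_0)
next
  case (Suc N)
  have "\<forall>m\<in>Poly_Mapping.keys (lap n f). mabs (fst m) < N"
  proof
    fix m
    assume "m \<in> Poly_Mapping.keys (lap n f)"
    then obtain m' where "m' \<in> Poly_Mapping.keys f" and "mabs (fst m) < mabs (fst m')"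
      using keys_lap_fst_smaller by blast
    then show "mabs (fst m) < N"
      using Suc.prems by fastforce
  qed
  then show ?case
    by (simp add: Suc.IH funpow_Suc_right del: funpow.simps)
qed

lemma lap_nilpotent: "\<exists>N. \<forall>M\<ge>N. (lap n ^^ M) f = 0"
proof (intro exI allI impI)
  fix M
  assume M: "Suc (\<Sum>m\<in>Poly_Mapping.keys f. mabs (fst m)) \<le> M"
  show "(lap n ^^ M) f = 0"
  proof (rule lap_pow_eq_0, intro ballI)
    fix m
    assume "m \<in> Poly_Mapping.keys f"
    then have "mabs (fst m) \<le> (\<Sum>m\<in>Poly_Mapping.keys f. mabs (fst m))"
      by (intro member_le_sum) auto
    then show "mabs (fst m) < M"
      using M by simp
  qed
qed

definition exp_coeff :: "real \<Rightarrow> nat \<Rightarrow> complex" where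
  "exp_coeff h k = complex_of_real ((- h) ^ k / fact k)"

lemma exp_coeff_0 [simp]: "exp_coeff h 0 = 1"
  by (simp add: exp_coeff_def)

lemma exp_coeff_Suc: "exp_coeff h (Suc k) * of_nat (Suc k) = of_real (- h) * exp_coeff h k"
proof -
  have "(- h) ^ Suc k / fact (Suc k) * real (Suc k) = - h * ((- h) ^ k / fact k)"
    by (simp add: field_simps del: of_nat_Suc)
  from arg_cong[OF this, of complex_of_real] show ?thesis
    by (simp only: exp_coeff_def of_real_mult of_real_of_nat_eq)
qed

lemma exp_lap_eq_sum:
  assumes "\<forall>M\<ge>N. (lap n ^^ M) f = 0"
  shows "exp_lap n h f = (\<Sum>k<N. pconst (exp_coeff h k) * (lap n ^^ k) f)"
proof -
  have exp_term_eq: "exp_term n h f k = pconst (exp_coeff h k) * (lap n ^^ k) f" for k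
    by (simp add: exp_term_def exp_coeff_def psmult_eq_pconst_mult)
  have "{k. exp_term n h f k \<noteq> 0} \<subseteq> {..<N}"
    using assms by (auto simp: exp_term_eq not_less[symmetric])
  then have "exp_lap n h f = (\<Sum>k<N. exp_term n h f k)"
    unfolding exp_lap_def by (rule sum.mono_neutral_left[rotated]) auto
  then show ?thesis
    by (simp add: exp_term_eq)
qed

lemma exp_lap_commute:
  assumes "additive Q" and "\<And>f. Q (lap n f) = lap n (Q f)"
    and "\<And>r f. Q (pconst (of_real r) * f) = pconst (of_real r) * Q f"
  shows "Q (exp_lap n h f) = exp_lap n h (Q f)"
proof -
  have Q_pow: "Q ((lap n ^^ k) f) = (lap n ^^ k) (Q f)" for k
    by (induction k) (simp_all add: assms(2))
  obtain N where N: "\<forall>M\<ge>N. (lap n ^^ M) f = 0"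
    using lap_nilpotent by blast
  then have QN: "\<forall>M\<ge>N. (lap n ^^ M) (Q f) = 0"
    by (simp flip: Q_pow add: additive.zero[OF assms(1)])
  have "Q (pconst (exp_coeff h k) * g) = pconst (exp_coeff h k) * Q g" for k g
    unfolding exp_coeff_def by (rule assms(3))
  then show ?thesis
    unfolding exp_lap_eq_sum[OF N] exp_lap_eq_sum[OF QN] by (simp add: additive.sum[OF assms(1)] Q_pow)
qed

lemma exp_lap_add: "exp_lap n h (f + g) = exp_lap n h f + exp_lap n h g"
proof -
  obtain N1 N2 where "\<forall>M\<ge>N1. (lap n ^^ M) f = 0" and "\<forall>M\<ge>N2. (lap n ^^ M) g = 0"
    using lap_nilpotent by metis
  then have f: "\<forall>M\<ge>max N1 N2. (lap n ^^ M) f = 0" and g: "\<forall>M\<ge>max N1 N2. (lap n ^^ M) g = 0"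
    by simp_all
  then have fg: "\<forall>M\<ge>max N1 N2. (lap n ^^ M) (f + g) = 0"
    by (simp add: lap_pow_add)
  show ?thesis
    unfolding exp_lap_eq_sum[OF f] exp_lap_eq_sum[OF g] exp_lap_eq_sum[OF fg]
    by (simp add: lap_pow_add distrib_left sum.distrib)
qed

lemma exp_lap_dz: "exp_lap n h (dz k f) = dz k (exp_lap n h f)"
  by (rule exp_lap_commute[symmetric]) (simp_all add: additive_def dz_add lap_dz dz_pconst_mult)

lemma exp_lap_dzb: "exp_lap n h (dzb k f) = dzb k (exp_lap n h f)"
  by (rule exp_lap_commute[symmetric]) (simp_all add: additive_def dzb_add lap_dzb dzb_pconst_mult)

lemma exp_lap_pconst_mult: "exp_lap n h (pconst c * f) = pconst c * exp_lap n h f"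
  by (rule exp_lap_commute[symmetric])
     (simp_all add: additive_def distrib_left lap_pconst_mult mult.left_commute)

lemma exp_lap_compconj: "exp_lap n h (compconj f) = compconj (exp_lap n h f)"
  by (rule exp_lap_commute[symmetric]) (simp_all add: additive_def compconj_add lap_compconj compconj_mult)

lemma exp_lap_pconj: "exp_lap n h (pconj f) = pconj (exp_lap n h f)"
  by (rule exp_lap_commute[symmetric])
     (simp_all add: additive_def pconj_add lap_pconj pconj_mult pconj_pconst)

lemma exp_lap_pconst: "exp_lap n h (pconst c) = pconst c"
proof -
  have "\<forall>M\<ge>1. (lap n ^^ M) (pconst c) = 0"
    by (auto simp: lap_def funpow_Suc_right lap_pow_zero dest!: Suc_le_D simp del: funpow.simps)
  then show ?thesis
    by (simp add: exp_lap_eq_sum)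
qed

lemma exp_lap_zero_param: "exp_lap n 0 f = f"
proof -
  obtain N where "\<forall>M\<ge>N. (lap n ^^ M) f = 0"
    using lap_nilpotent by blast
  then have N: "\<forall>M\<ge>Suc N. (lap n ^^ M) f = 0"
    by simp
  show ?thesis
    unfolding exp_lap_eq_sum[OF N] by (simp only: sum.lessThan_Suc_shift) (simp add: exp_coeff_def)
qed

lemma exp_partial_sum_zvar:
  assumes "k \<le> n"
  shows "(\<Sum>m<Suc N. pconst (exp_coeff h m) * (lap n ^^ m) (zvar k * u))
     = zvar k * (\<Sum>m<Suc N. pconst (exp_coeff h m) * (lap n ^^ m) u)
       + pconst (of_real (- h)) * dzb k (\<Sum>m<N. pconst (exp_coeff h m) * (lap n ^^ m) u)"
proof (induction N)
  case (Suc N)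
  let ?c = "\<lambda>m. pconst (exp_coeff h m)"
  have "?c (Suc N) * (lap n ^^ Suc N) (zvar k * u)
      = zvar k * (?c (Suc N) * (lap n ^^ Suc N) u) + (?c (Suc N) * of_nat (Suc N)) * dzb k ((lap n ^^ N) u)"
    by (simp only: lap_pow_zvar[OF assms] distrib_left mult.assoc mult.left_commute)
  also have "?c (Suc N) * of_nat (Suc N) = pconst (of_real (- h)) * ?c N"
    by (simp only: exp_coeff_Suc flip: pconst_of_nat pconst_mult)
  finally show ?case
    using Suc.IH by (simp add: dzb_add dzb_pconst_mult algebra_simps)
qed simp

lemma exp_lap_zvar:
  assumes "k \<le> n"
  shows "exp_lap n h (zvar k * u) = zvar k * exp_lap n h u + pconst (of_real (- h)) * dzb k (exp_lap n h u)"
proof -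
  obtain N where N: "\<forall>M\<ge>N. (lap n ^^ M) u = 0"
    using lap_nilpotent by blast
  then have N_Suc: "\<forall>M\<ge>Suc N. (lap n ^^ M) u = 0"
    by simp
  have "(lap n ^^ Suc m) (zvar k * u) = 0" if "N \<le> m" for m
    using N that by (simp only: lap_pow_zvar[OF assms]) simp
  then have N_zvar: "\<forall>M\<ge>Suc N. (lap n ^^ M) (zvar k * u) = 0"
    by (metis Suc_le_D Suc_le_mono)
  show ?thesis
    unfolding exp_lap_eq_sum[OF N_zvar] exp_partial_sum_zvar[OF assms]
    by (simp only: exp_lap_eq_sum[OF N_Suc, symmetric] exp_lap_eq_sum[OF N, symmetric])
qed

lemma exp_lap_zbvar:
  assumes "k \<le> n"
  shows "exp_lap n h (zbvar k * u) = zbvar k * exp_lap n h u + pconst (of_real (- h)) * dz k (exp_lap n h u)"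
proof -
  have "zbvar k * u = compconj (zvar k * compconj u)"
    by (simp add: compconj_mult)
  then have "exp_lap n h (zbvar k * u) = compconj (exp_lap n h (zvar k * compconj u))"
    by (simp only: exp_lap_compconj)
  also have "\<dots> = compconj (zvar k * exp_lap n h (compconj u)
      + pconst (of_real (- h)) * dzb k (exp_lap n h (compconj u)))"
    by (simp only: exp_lap_zvar[OF assms])
  also have "\<dots> = zbvar k * exp_lap n h u + pconst (of_real (- h)) * dz k (exp_lap n h u)"
    by (simp add: compconj_add compconj_mult compconj_dzb exp_lap_compconj)
  finally show ?thesis .
qed

lemma Pn_0: "0 \<in> Pn n"
  by (simp add: Pn_def)

lemma Pn_add:
  assumes "f \<in> Pn n" and "g \<in> Pn n"
  shows "f + g \<in> Pn n"
  unfolding Pn_def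
proof (intro CollectI ballI)
  fix m
  assume "m \<in> Poly_Mapping.keys (f + g)"
  then have "m \<in> Poly_Mapping.keys f \<union> Poly_Mapping.keys g"
    by (rule subsetD[OF keys_add])
  then show "Poly_Mapping.keys (fst m) \<subseteq> {..n} \<and> Poly_Mapping.keys (snd m) \<subseteq> {..n}"
    using assms unfolding Pn_def by blast
qed

lemma Pn_sum: "(\<And>a. a \<in> A \<Longrightarrow> F a \<in> Pn n) \<Longrightarrow> sum F A \<in> Pn n"
  by (induction A rule: infinite_finite_induct) (simp_all add: Pn_0 Pn_add)

lemma Pn_linmap:
  assumes "f \<in> Pn n"
    and "\<And>a b. Poly_Mapping.keys a \<subseteq> {..n} \<Longrightarrow> Poly_Mapping.keys b \<subseteq> {..n}
      \<Longrightarrow> Poly_Mapping.keys (fst (\<sigma> (a, b))) \<subseteq> {..n} \<and> Poly_Mapping.keys (snd (\<sigma> (a, b))) \<subseteq> {..n}"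
  shows "linmap \<sigma> w f \<in> Pn n"
  unfolding Pn_def
proof (intro CollectI ballI)
  fix m'
  assume "m' \<in> Poly_Mapping.keys (linmap \<sigma> w f)"
  then obtain m where "m \<in> Poly_Mapping.keys f" and "m' = \<sigma> m"
    using subsetD[OF keys_linmap] by blast
  then show "Poly_Mapping.keys (fst m') \<subseteq> {..n} \<and> Poly_Mapping.keys (snd m') \<subseteq> {..n}"
    using assms unfolding Pn_def by (cases m) fastforce
qed

lemma Pn_dz: "f \<in> Pn n \<Longrightarrow> dz j f \<in> Pn n"
  unfolding dz_eq_linmap by (intro Pn_linmap) (auto dest!: subsetD[OF keys_diff_unit_index])

lemma Pn_dzb: "f \<in> Pn n \<Longrightarrow> dzb j f \<in> Pn n"
  unfolding dzb_eq_linmap by (intro Pn_linmap) (auto dest!: subsetD[OF keys_diff_unit_index])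

lemma Pn_compconj: "f \<in> Pn n \<Longrightarrow> compconj f \<in> Pn n"
  unfolding compconj_eq_linmap by (intro Pn_linmap) auto

lemma Pn_pconst_mult: "f \<in> Pn n \<Longrightarrow> pconst c * f \<in> Pn n"
  unfolding pconst_mult_eq_linmap by (intro Pn_linmap) auto

lemma Pn_lap_pow: "f \<in> Pn n \<Longrightarrow> (lap k ^^ m) f \<in> Pn n"
  by (induction m) (simp_all add: lap_def Pn_sum Pn_dz Pn_dzb)

lemma Pn_exp_lap: "f \<in> Pn n \<Longrightarrow> exp_lap k h f \<in> Pn n"
  using lap_nilpotent[of k f] by (auto simp: exp_lap_eq_sum intro!: Pn_sum Pn_pconst_mult Pn_lap_pow)

lemma Pn_induct [consumes 1, case_names pconst zvar zbvar add]:
  assumes "f \<in> Pn n"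
    and pconst: "\<And>c. P (pconst c)"
    and zvar: "\<And>k u. k \<le> n \<Longrightarrow> P u \<Longrightarrow> P (zvar k * u)"
    and zbvar: "\<And>k u. k \<le> n \<Longrightarrow> P u \<Longrightarrow> P (zbvar k * u)"
    and add: "\<And>u v. P u \<Longrightarrow> P v \<Longrightarrow> P (u + v)"
  shows "P f"
proof -
  have antiholomorphic: "P (monom (0, b) c)" if "Poly_Mapping.keys b \<subseteq> {..n}" for b c
    using that
  proof (induction b rule: multi_index_induct)
    case (add_unit_index K k)
    then have "P (zbvar k * monom (0, K) c)"
      by (intro zbvar) (auto simp: keys_add_unit_index)
    then show ?case
      by (simp add: zbvar_def monom_mult add.commute)
  qed (simp add: pconst monom_zero_eq_pconst)
  have monom: "P (monom (a, b) c)" if "Poly_Mapping.keys a \<subseteq> {..n}" and "Poly_Mapping.keys b \<subseteq> {..n}" for a b c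
    using that
  proof (induction a rule: multi_index_induct)
    case (add_unit_index K k)
    then have "P (zvar k * monom (K, b) c)"
      by (intro zvar) (auto simp: keys_add_unit_index)
    then show ?case
      by (simp add: zvar_def monom_mult add.commute)
  qed (simp add: antiholomorphic)
  have "P (\<Sum>m\<in>Poly_Mapping.keys f. monom m (coeff f m))"
    using finite_keys subset_refl
  proof (induction rule: finite_subset_induct)
    case empty
    show ?case
      using pconst[of 0] by simp
  next
    case (insert m F)
    then show ?case
      using assms(1) monom[of "fst m" "snd m"] by (simp add: add Pn_def)
  qed
  then show ?thesis
    by (subst cpoly_eq_sum_monoms)
qed

text \<open>The group law holds for all polynomials; \<open>u \<in> Pn n\<close> is assumed only because the
  induction uses \<open>exp_lap_zvar\<close>, which needs \<open>k \<le> n\<close>.\<close>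

lemma exp_lap_exp_lap:
  assumes "u \<in> Pn n"
  shows "exp_lap n s (exp_lap n t u) = exp_lap n (s + t) u"
  using assms
proof (induction u rule: Pn_induct)
  case (pconst c)
  show ?case
    by (simp add: exp_lap_pconst)
next
  case (zvar k u)
  let ?E = "exp_lap n (s + t) u"
  have "exp_lap n s (exp_lap n t (zvar k * u))
      = zvar k * ?E + (pconst (of_real (- s)) + pconst (of_real (- t))) * dzb k ?E"
    by (simp only: exp_lap_zvar[OF zvar(1)] exp_lap_add exp_lap_pconst_mult exp_lap_dzb zvar(2))
       (simp add: algebra_simps)
  also have "\<dots> = exp_lap n (s + t) (zvar k * u)"
    using zvar by (simp add: exp_lap_zvar flip: pconst_add)
  finally show ?case .
next
  case (zbvar k u)
  let ?E = "exp_lap n (s + t) u"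
  have "exp_lap n s (exp_lap n t (zbvar k * u))
      = zbvar k * ?E + (pconst (of_real (- s)) + pconst (of_real (- t))) * dz k ?E"
    by (simp only: exp_lap_zbvar[OF zbvar(1)] exp_lap_add exp_lap_pconst_mult exp_lap_dz zbvar(2))
       (simp add: algebra_simps)
  also have "\<dots> = exp_lap n (s + t) (zbvar k * u)"
    using zbvar by (simp add: exp_lap_zbvar flip: pconst_add)
  finally show ?case .
next
  case (add u v)
  then show ?case
    by (simp add: exp_lap_add)
qed

section \<open>The map Theta\<close>

lemma Theta_add: "Theta n h (f + g) = Theta n h f + Theta n h g"
  by (simp add: Theta_def exp_lap_add compconj_add)

lemma Theta_pconst_mult: "Theta n h (pconst c * f) = pconst c * Theta n h f"
  by (simp add: Theta_def exp_lap_pconst_mult compconj_mult)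

lemma Theta_pconst: "Theta n h (pconst c) = pconst c"
  by (simp add: Theta_def exp_lap_pconst)

lemma Theta_dzb: "Theta n h (dzb k f) = dz k (Theta n h f)"
  by (simp add: Theta_def exp_lap_dzb compconj_dzb)

lemma Theta_zvar:
  "k \<le> n \<Longrightarrow> Theta n h (zvar k * u) = zbvar k * Theta n h u + pconst (of_real (- h)) * dz k (Theta n h u)"
  by (simp add: Theta_def exp_lap_zvar compconj_add compconj_mult compconj_dzb)

lemma Theta_zbvar:
  "k \<le> n \<Longrightarrow> Theta n h (zbvar k * u) = zvar k * Theta n h u + pconst (of_real (- h)) * dzb k (Theta n h u)"
  by (simp add: Theta_def exp_lap_zbvar compconj_add compconj_mult compconj_dz)

lemma Theta_wick:
  assumes "g \<in> Pn n"
  shows "Theta n h (wick h f g) = wick (- h) (Theta n h f) (Theta n h g)"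
  using assms
proof (induction g arbitrary: f rule: Pn_induct)
  case (pconst c)
  show ?case
    by (simp add: wick_pconst_right Theta_pconst_mult Theta_pconst)
next
  case (zvar k u)
  let ?X = "wick (- h) (Theta n h f) (Theta n h u)"
  have "Theta n h (wick h f (zvar k * u))
      = zbvar k * ?X + pconst (of_real (- h)) * dz k ?X
        + pconst (of_real h) * wick (- h) (dz k (Theta n h f)) (Theta n h u)"
    using zvar by (simp add: wick_zvar_right Theta_add Theta_zvar Theta_pconst_mult Theta_dzb)
  also have "\<dots> = zbvar k * ?X + pconst (of_real (- h)) * wick (- h) (Theta n h f) (dz k (Theta n h u))"
    by (simp add: dz_wick pconst_uminus algebra_simps)
  also have "\<dots> = wick (- h) (Theta n h f) (Theta n h (zvar k * u))"
    using zvar by (simp add: Theta_zvar wick_add_right wick_zbvar_right wick_pconst_mult_right)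
  finally show ?case .
next
  case (zbvar k u)
  let ?X = "wick (- h) (Theta n h f) (Theta n h u)"
  have "Theta n h (wick h f (zbvar k * u)) = zvar k * ?X + pconst (of_real (- h)) * dzb k ?X"
    using zbvar by (simp add: wick_zbvar_right Theta_zbvar)
  also have "\<dots> = wick (- h) (Theta n h f)
      (zvar k * Theta n h u + pconst (of_real (- h)) * dzb k (Theta n h u))"
    by (simp add: dzb_wick wick_add_right wick_zvar_right wick_pconst_mult_right distrib_left add.assoc)
  also have "\<dots> = wick (- h) (Theta n h f) (Theta n h (zbvar k * u))"
    using zbvar by (simp only: Theta_zbvar)
  finally show ?case .
next
  case (add u v)
  then show ?case
    by (simp add: wick_add_right Theta_add)
qed

lemma Theta_pconj: "Theta n h (pconj f) = pconj (Theta n h f)"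
  by (simp add: Theta_def exp_lap_pconj pconj_compconj)

lemma bij_betw_Theta: "bij_betw (Theta n h) (Pn n) (Pn n)"
proof (rule bij_betw_byWitness[where f' = "\<lambda>f. exp_lap n (- h) (compconj f)"])
  show "\<forall>f\<in>Pn n. exp_lap n (- h) (compconj (Theta n h f)) = f"
    by (simp add: Theta_def exp_lap_exp_lap exp_lap_zero_param)
  show "\<forall>f\<in>Pn n. Theta n h (exp_lap n (- h) (compconj f)) = f"
    by (simp add: Theta_def exp_lap_exp_lap exp_lap_zero_param Pn_compconj)
  show "Theta n h ` Pn n \<subseteq> Pn n"
    by (auto simp: Theta_def intro: Pn_compconj Pn_exp_lap)
  show "(\<lambda>f. exp_lap n (- h) (compconj f)) ` Pn n \<subseteq> Pn n"
    by (auto intro: Pn_compconj Pn_exp_lap)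
qed

theorem lemma6p3:
  fixes n :: nat and h :: real
  assumes "h > 0"
  shows "bij_betw (Theta n h) (Pn n) (Pn n)
     \<and> (\<forall>f\<in>Pn n. \<forall>g\<in>Pn n. \<forall>c \<in> (UNIV :: complex set).
          Theta n h (f + g) = Theta n h f + Theta n h g
        \<and> Theta n h (psmult c f) = psmult c (Theta n h f))
     \<and> (\<forall>f\<in>Pn n. \<forall>g\<in>Pn n. Theta n h (wick h f g) = wick (- h) (Theta n h f) (Theta n h g))
     \<and> (\<forall>f\<in>Pn n. Theta n h (pconj f) = pconj (Theta n h f))"
  by (simp add: bij_betw_Theta Theta_add psmult_eq_pconst_mult Theta_pconst_mult Theta_wick Theta_pconj)

end
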